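(* Let $\mathcal C$ be a closed curve and $P_1,P_2,\dots,P_N$ distinct points on $\mathcal C$ listed in cyclic order around $\mathcal C$, with the convention $P_{N+1}=P_1$ and $P_{N+2}=P_2$. Assume there are positive constants $A_0$ and $R_0$ such that (a) for all $j\in\{1,\dots,N\}$, $\frac{A_0}{2}\le\mathrm{Area}(\triangle P_jP_{j+1}P_{j+2})$; (b) for each $j\in\{1,\dots,N\}$ the points $P_j,P_{j+1},P_{j+2}$ lie on a circle of radius $\ge R_0$. Then $$N<\frac{\mathrm{Length}(\mathcal C)}{(A_0R_0)^{1/3}}.$$ *)

theory Defs
  imports "HOL-Analysis.Analysis"
begin

text \<open>The length of a curve
  g on [0,1] is the supremum (in the extended reals, so non-rectifiable curves
  have length infinity) of the lengths of inscribed polygons.\<close>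

definition curve_length :: "(real \<Rightarrow> complex) \<Rightarrow> ereal" where
  "curve_length g =
     (SUP p \<in> {(t :: nat \<Rightarrow> real, k :: nat). t 0 = 0 \<and> t k = 1 \<and> (\<forall>i<k. t i \<le> t (Suc i))}.
        ereal (\<Sum>i < snd p. dist (g (fst p i)) (g (fst p (Suc i)))))"

definition triangle_area :: "complex \<Rightarrow> complex \<Rightarrow> complex \<Rightarrow> real" where
  "triangle_area a b c =
     \<bar>Re (b - a) * Im (c - a) - Im (b - a) * Re (c - a)\<bar> / 2"

end

theory Submission
  imports Defs
begin

(* The vertices of each triangle P_j P_(j+1) P_(j+2) lie on a circle of radius r \<ge> R0, so the
   classical relation abc = 4 r Area between side lengths, circumradius and area gives
   x y z \<ge> 2 A0 R0, where x and y are the consecutive sides and z is the third one.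
   Nondegeneracy gives z < x + y, and with 4 x y \<le> (x + y)^2 this yields
   (x + y)^3 > 8 A0 R0, i.e. x + y > 2 (A0 R0)^(1/3).  Summing over j counts every side of
   the closed polygon P_1 ... P_N twice, and the polygon is inscribed in the curve, so its
   length is at most the length of the curve. *)

lemma side_product_eq_circumradius_area:
  fixes a b d c :: complex
  assumes "dist a c = r" "dist b c = r" "dist d c = r"
  shows "dist a b * dist b d * dist a d = 4 * r * triangle_area a b d"
proof -
  define a1 a2 b1 b2 d1 d2 where "a1 = Re (a - c)" "a2 = Im (a - c)" "b1 = Re (b - c)"
    "b2 = Im (b - c)" "d1 = Re (d - c)" "d2 = Im (d - c)"
  note coords = a1_a2_b1_b2_d1_d2_def
  have on_circle: "a1\<^sup>2 + a2\<^sup>2 = r\<^sup>2" "b1\<^sup>2 + b2\<^sup>2 = r\<^sup>2" "d1\<^sup>2 + d2\<^sup>2 = r\<^sup>2"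
    using assms unfolding coords dist_norm by (metis cmod_power2)+
  have sides: "dist a b ^ 2 = (b1 - a1)\<^sup>2 + (b2 - a2)\<^sup>2"
    "dist b d ^ 2 = (d1 - b1)\<^sup>2 + (d2 - b2)\<^sup>2" "dist a d ^ 2 = (d1 - a1)\<^sup>2 + (d2 - a2)\<^sup>2"
    unfolding coords dist_norm cmod_power2 by (simp_all add: power2_commute)
  have area: "(2 * triangle_area a b d)\<^sup>2 = ((b1 - a1) * (d2 - a2) - (b2 - a2) * (d1 - a1))\<^sup>2"
    unfolding coords triangle_area_def by (simp add: power2_abs)
  have "((b1 - a1)\<^sup>2 + (b2 - a2)\<^sup>2) * ((d1 - b1)\<^sup>2 + (d2 - b2)\<^sup>2) * ((d1 - a1)\<^sup>2 + (d2 - a2)\<^sup>2)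
      = 4 * r\<^sup>2 * ((b1 - a1) * (d2 - a2) - (b2 - a2) * (d1 - a1))\<^sup>2"
    using on_circle by algebra
  then have "(dist a b * dist b d * dist a d)\<^sup>2 = (4 * r * triangle_area a b d)\<^sup>2"
    unfolding power_mult_distrib sides by (simp add: area[unfolded power_mult_distrib, symmetric])
  moreover have "r \<ge> 0" "triangle_area a b d \<ge> 0"
    using assms(1) by (auto simp: triangle_area_def)
  ultimately show ?thesis
    by (simp add: power2_eq_iff_nonneg)
qed

lemma dist_less_add_dist_if_triangle_area_pos:
  assumes "triangle_area a b d > 0"
  shows "dist a d < dist a b + dist b d"
proof -
  have "dist a d \<noteq> dist a b + dist b d"
  proof
    define u v where "u = a - b" and "v = b - d"
    assume "dist a d = dist a b + dist b d"
    then have "cmod u *\<^sub>R v = cmod v *\<^sub>R u"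
      by (simp add: dist_triangle_eq u_def v_def)
    then have "cmod u * Re v = cmod v * Re u" "cmod u * Im v = cmod v * Im u"
      by (simp_all add: complex_eq_iff)
    then have "cmod u * (Re u * Im v - Im u * Re v) = 0"
      by algebra
    moreover have "u \<noteq> 0"
      using assms by (auto simp: triangle_area_def u_def)
    ultimately have "Re u * Im v - Im u * Re v = 0"
      by simp
    moreover have "b - a = - u" "d - a = - (u + v)"
      by (simp_all add: u_def v_def)
    ultimately have "triangle_area a b d = 0"
      unfolding triangle_area_def by (simp only:) (simp add: algebra_simps)
    with assms show False
      by simp
  qed
  then show ?thesis
    using dist_triangle[of a d b] by simp
qed

lemma four_mult_less_add_cube:
  fixes x y z :: real
  assumes "x \<ge> 0" "y \<ge> 0" "z \<ge> 0" "z < x + y"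
  shows "4 * x * y * z < (x + y) ^ 3"
proof -
  have "4 * x * y * z \<le> (x + y)\<^sup>2 * z"
  proof (rule mult_right_mono)
    show "4 * x * y \<le> (x + y)\<^sup>2"
      using zero_le_power2[of "x - y"] by (simp add: power2_eq_square algebra_simps)
  qed (fact assms(3))
  also have "\<dots> < (x + y)\<^sup>2 * (x + y)"
    using assms by (intro mult_strict_left_mono) auto
  finally show ?thesis
    by (simp add: power3_eq_cube power2_eq_square)
qed

lemma consecutive_sides_gt_cube_root:
  fixes a b d c :: complex
  assumes area: "A / 2 \<le> triangle_area a b d"
    and circle: "dist a c = r" "dist b c = r" "dist d c = r" "R \<le> r"
    and pos: "A > 0" "R > 0"
  shows "2 * (A * R) powr (1 / 3) < dist a b + dist b d"
proof -
  have "R * (A / 2) \<le> r * triangle_area a b d"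
    using area circle(4) pos by (intro mult_mono) auto
  then have "8 * (A * R) \<le> 4 * (4 * r * triangle_area a b d)"
    by (simp add: algebra_simps)
  also have "\<dots> = 4 * dist a b * dist b d * dist a d"
    using side_product_eq_circumradius_area[OF circle(1-3)] by (simp add: ac_simps)
  also have "\<dots> < (dist a b + dist b d) ^ 3"
    using area pos by (intro four_mult_less_add_cube dist_less_add_dist_if_triangle_area_pos) auto
  finally have "(2 * (A * R) powr (1 / 3)) ^ 3 < (dist a b + dist b d) ^ 3"
    using pos by (simp add: power_mult_distrib powr_realpow[symmetric] powr_powr)
  then show ?thesis
    by (rule power_less_imp_less_base) simp
qed

lemma sum_shift_cyclic:
  fixes f :: "nat \<Rightarrow> 'a::comm_monoid_add"
  assumes "f (Suc n) = f 1"
  shows "(\<Sum>j = 1..n. f (Suc j)) = (\<Sum>j = 1..n. f j)"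
proof (cases n)
  case (Suc m)
  have "(\<Sum>j = 1..n. f (Suc j)) = (\<Sum>j = 2..Suc n. f j)"
    using sum.shift_bounds_cl_Suc_ivl[of f 1 n] by (simp add: numeral_2_eq_2)
  also have "\<dots> = (\<Sum>j = 2..n. f j) + f 1"
    using Suc assms by simp
  also have "\<dots> = (\<Sum>j = 1..n. f j)"
    using Suc by (simp add: sum.atLeast_Suc_atMost numeral_2_eq_2 ac_simps)
  finally show ?thesis .
qed simp

lemma inscribed_polygon_le_curve_length:
  assumes "t 0 = 0" "t k = 1" "\<And>i. i < k \<Longrightarrow> t i \<le> t (Suc i)"
  shows "ereal (\<Sum>i < k. dist (g (t i)) (g (t (Suc i)))) \<le> curve_length g"
  unfolding curve_length_def using assms by (intro SUP_upper2[of "(t, k)"]) auto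

lemma closed_polygon_le_curve_length:
  assumes closed: "g 1 = g 0"
    and order: "0 \<le> s 1" "s n \<le> 1" "\<And>j. 1 \<le> j \<Longrightarrow> j < n \<Longrightarrow> s j \<le> s (Suc j)"
    and on_curve: "\<And>j. 1 \<le> j \<Longrightarrow> j \<le> n \<Longrightarrow> P j = g (s j)"
    and wrap: "P (Suc n) = P 1"
    and "n \<ge> 1"
  shows "ereal (\<Sum>j = 1..n. dist (P j) (P (Suc j))) \<le> curve_length g"
proof -
  define t where "t i = (if i = 0 then 0 else if i \<le> n then s i else 1)" for i
  let ?polygon = "\<Sum>i < Suc n. dist (g (t i)) (g (t (Suc i)))"
  have "?polygon = dist (g 0) (P 1) + (\<Sum>j = 1..<n. dist (P j) (P (Suc j))) + dist (P n) (g 1)"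
    using \<open>n \<ge> 1\<close> by (simp add: lessThan_atLeast0 sum.atLeast_Suc_lessThan t_def on_curve)
  moreover have "dist (P n) (P 1) \<le> dist (P n) (g 1) + dist (g 0) (P 1)"
    using dist_triangle[of "P n" "P 1" "g 1"] closed by (simp add: dist_commute)
  ultimately have "(\<Sum>j = 1..n. dist (P j) (P (Suc j))) \<le> ?polygon"
    using \<open>n \<ge> 1\<close> wrap by (simp add: sum.last_plus)
  also have "ereal ?polygon \<le> curve_length g"
  proof (rule inscribed_polygon_le_curve_length)
    show "t i \<le> t (Suc i)" if "i < Suc n" for i
      using that order \<open>n \<ge> 1\<close> less_Suc_eq[of i n] by (auto simp: t_def)
  qed (simp_all add: t_def)
  finally show ?thesis
    by simp
qed

theorem theorem3p2:
  fixes g :: "real \<Rightarrow> complex" and N :: nat and s :: "nat \<Rightarrow> real"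
    and P :: "nat \<Rightarrow> complex" and A0 R0 :: real
  assumes closed_curve: "path g" "pathfinish g = pathstart g"
    and N3: "N \<ge> 3"
    and order: "0 \<le> s 1" "s N < 1" "\<And>j. 1 \<le> j \<Longrightarrow> j < N \<Longrightarrow> s j < s (Suc j)"
    and on_curve: "\<And>j. 1 \<le> j \<Longrightarrow> j \<le> N \<Longrightarrow> P j = g (s j)"
    and wrap: "P (N + 1) = P 1" "P (N + 2) = P 2"
    and distinct: "inj_on P {1..N}"
    and pos: "A0 > 0" "R0 > 0"
    and area: "\<And>j. 1 \<le> j \<Longrightarrow> j \<le> N \<Longrightarrow> A0 / 2 \<le> triangle_area (P j) (P (j + 1)) (P (j + 2))"
    and circle: "\<And>j. 1 \<le> j \<Longrightarrow> j \<le> N \<Longrightarrow>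
        \<exists>c r. r \<ge> R0 \<and> cmod (P j - c) = r \<and> cmod (P (j + 1) - c) = r \<and> cmod (P (j + 2) - c) = r"
  shows "ereal (real N) < curve_length g / ereal ((A0 * R0) powr (1 / 3))"
proof -
  define k where "k = (A0 * R0) powr (1 / 3)"
  define d where "d j = dist (P j) (P (Suc j))" for j
  have sides: "2 * k < d j + d (Suc j)" if j: "1 \<le> j" "j \<le> N" for j
  proof -
    obtain c r where "r \<ge> R0"
      "dist (P j) c = r" "dist (P (Suc j)) c = r" "dist (P (Suc (Suc j))) c = r"
      using circle[OF j] by (auto simp: dist_norm)
    then show ?thesis
      using area[OF j] pos unfolding k_def d_def
      by (intro consecutive_sides_gt_cube_root) (auto simp: numeral_2_eq_2)
  qed
  have "real N * (2 * k) < (\<Sum>j = 1..N. d j + d (Suc j))"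
    using sum_strict_mono[of "{1..N}" "\<lambda>_. 2 * k"] sides N3 by simp
  also have "\<dots> = 2 * (\<Sum>j = 1..N. d j)"
    using sum_shift_cyclic[of d N] wrap by (simp add: sum.distrib d_def numeral_2_eq_2)
  finally have "ereal (real N * k) < ereal (\<Sum>j = 1..N. d j)"
    by simp
  also have "\<dots> \<le> curve_length g"
    unfolding d_def using closed_curve N3 order wrap
    by (intro closed_polygon_le_curve_length[where s = s])
      (auto simp: on_curve pathstart_def pathfinish_def less_imp_le)
  finally show ?thesis
    using pos by (simp add: ereal_less_divide_pos k_def mult.commute)
qed

end
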